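(* Let $\epsilon>0$, $\ell>0$, $\beta\ge 0$, and for $\delta\in(0,1)$ let $$\Lambda:=\begin{bmatrix}-\epsilon(1-\delta) & \frac{\epsilon}{2}(\ell(1-\delta)+\delta\beta)\\ \frac{\epsilon}{2}(\ell(1-\delta)+\delta\beta) & -\frac12\delta\end{bmatrix}.$$ If $\epsilon<\frac{1}{2\ell\beta}$, then $\Lambda\prec 0$ for some $\delta^\star\in(0,1)$.
   Context: In the paper, $\ell$ is a constant with $\|\widetilde H^T(\nabla\Phi(x,u)-\nabla\Phi(x',u))\|\le\ell\|x-x'\|$ and $\beta=\|PH\|$ for a positive definite Lyapunov matrix $P$; for the statement only $\ell>0$ and $\beta\ge0$ matter. $\Lambda\prec 0$ means negative definite. *)

theory Defs
  imports "HOL-Analysis.Analysis"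
begin

definition neg_definite :: "real^'n^'n \<Rightarrow> bool" where
  "neg_definite M \<longleftrightarrow> (\<forall>x::real^'n. x \<noteq> 0 \<longrightarrow> x \<bullet> (M *v x) < 0)"

definition Lam :: "real \<Rightarrow> real \<Rightarrow> real \<Rightarrow> real \<Rightarrow> real^2^2" where
  "Lam \<epsilon> l \<beta> \<delta> =
     (let b = \<epsilon> / 2 * (l * (1 - \<delta>) + \<delta> * \<beta>) in
      vector [vector [- \<epsilon> * (1 - \<delta>), b], vector [b, - (1/2) * \<delta>]])"

end

theory Submission
  imports Defs
begin

text \<open>
  A symmetric 2x2 matrix with a negative diagonal entry and positive determinant is negative
  definite.  Writing \<open>c = \<epsilon> l \<beta> < 1/2\<close> and \<open>D = 1 - c + \<epsilon> l\<^sup>2\<close>, the choice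
  \<open>\<delta> = \<epsilon> l\<^sup>2 / D\<close> collapses the off-diagonal entry to \<open>\<epsilon> l / (2 D)\<close>, so that
  \<open>D \<Lambda> = \<epsilon> [[-(1 - c), l/2], [l/2, -l\<^sup>2/2]]\<close>, a matrix of determinant
  \<open>l\<^sup>2 (1 - 2c) / 4 > 0\<close>.
\<close>

lemma inner_matrix_vector_mult_2x2:
  fixes x :: "real^2"
  shows "x \<bullet> ((vector [vector [a, b], vector [b, d]] :: real^2^2) *v x) =
           a * (x$1)\<^sup>2 + 2 * b * x$1 * x$2 + d * (x$2)\<^sup>2"
  by (simp add: inner_vec_def matrix_vector_mult_def sum_2 UNIV_2 algebra_simps power2_eq_square)

lemma binary_quadratic_form_neg:
  fixes a b d x y :: real
  assumes "a < 0" and "b\<^sup>2 < a * d" and "x \<noteq> 0 \<or> y \<noteq> 0"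
  shows "a * x\<^sup>2 + 2 * b * x * y + d * y\<^sup>2 < 0"
proof -
  have complete_square:
    "a * (a * x\<^sup>2 + 2 * b * x * y + d * y\<^sup>2) = (a * x + b * y)\<^sup>2 + (a * d - b\<^sup>2) * y\<^sup>2"
    by (simp add: algebra_simps power2_eq_square)
  have "(a * x + b * y)\<^sup>2 + (a * d - b\<^sup>2) * y\<^sup>2 > 0"
  proof (cases "y = 0")
    case True
    with assms show ?thesis by simp
  next
    case False
    with assms have "(a * d - b\<^sup>2) * y\<^sup>2 > 0" by simp
    then show ?thesis by (simp add: add_nonneg_pos)
  qed
  with complete_square have "a * (a * x\<^sup>2 + 2 * b * x * y + d * y\<^sup>2) > 0"
    by simp
  with \<open>a < 0\<close> show ?thesis
    by (simp add: zero_less_mult_iff)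
qed

lemma neg_definite_2x2:
  fixes a b d :: real
  assumes "a < 0" and "b\<^sup>2 < a * d"
  shows "neg_definite (vector [vector [a, b], vector [b, d]] :: real^2^2)"
  unfolding neg_definite_def
proof (intro allI impI)
  fix x :: "real^2"
  assume "x \<noteq> 0"
  then have "x$1 \<noteq> 0 \<or> x$2 \<noteq> 0"
    by (metis exhaust_2 vec_eq_iff zero_index)
  with assms show "x \<bullet> (vector [vector [a, b], vector [b, d]] *v x) < 0"
    by (simp add: inner_matrix_vector_mult_2x2 binary_quadratic_form_neg)
qed

theorem lemma2:
  fixes \<epsilon> l \<beta> :: real
  assumes "\<epsilon> > 0" and "l > 0" and "\<beta> \<ge> 0"
    and "2 * l * \<beta> * \<epsilon> < 1"
  shows "\<exists>\<delta>\<in>{0<..<1}. neg_definite (Lam \<epsilon> l \<beta> \<delta>)"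
proof -
  define c where "c = \<epsilon> * l * \<beta>"
  define D where "D = 1 - c + \<epsilon> * l\<^sup>2"
  define \<delta> where "\<delta> = \<epsilon> * l\<^sup>2 / D"
  have "c < 1/2" and "\<epsilon> * l\<^sup>2 > 0"
    using assms by (simp_all add: c_def mult.commute mult.left_commute)
  then have "D > 0" and "\<epsilon> * l\<^sup>2 < D"
    by (simp_all add: D_def)
  then have "\<delta> \<in> {0<..<1}"
    using \<open>\<epsilon> * l\<^sup>2 > 0\<close> by (simp add: \<delta>_def)
  have one_minus: "1 - \<delta> = (1 - c) / D"
    using \<open>D > 0\<close> by (simp add: \<delta>_def D_def field_simps)
  have "l * (1 - \<delta>) + \<delta> * \<beta> = l / D"
    unfolding one_minus using \<open>D > 0\<close> by (simp add: \<delta>_def c_def field_simps power2_eq_square)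
  then have off_diagonal: "\<epsilon> / 2 * (l * (1 - \<delta>) + \<delta> * \<beta>) = \<epsilon> * l / (2 * D)"
    by simp
  have "neg_definite (Lam \<epsilon> l \<beta> \<delta>)"
    unfolding Lam_def Let_def off_diagonal
  proof (rule neg_definite_2x2)
    show "- \<epsilon> * (1 - \<delta>) < 0"
      using \<open>\<epsilon> > 0\<close> \<open>c < 1/2\<close> \<open>D > 0\<close> by (simp add: one_minus)
    have "- \<epsilon> * (1 - \<delta>) * (- (1/2) * \<delta>) - (\<epsilon> * l / (2 * D))\<^sup>2
            = \<epsilon>\<^sup>2 * l\<^sup>2 * (1 - 2 * c) / (4 * D\<^sup>2)"
      unfolding one_minus using \<open>D > 0\<close> by (simp add: \<delta>_def field_simps power2_eq_square)
    also have "\<dots> > 0"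
      using \<open>\<epsilon> > 0\<close> \<open>l > 0\<close> \<open>c < 1/2\<close> \<open>D > 0\<close> by simp
    finally show "(\<epsilon> * l / (2 * D))\<^sup>2 < - \<epsilon> * (1 - \<delta>) * (- (1/2) * \<delta>)"
      by simp
  qed
  with \<open>\<delta> \<in> {0<..<1}\<close> show ?thesis by blast
qed

end
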